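(* Let $\mathcal{G}$ be a mutant-biased fitness graph and $k$ a budget. Let $S^*\in\arg\max_{S\subseteq V,|S|\le k}\operatorname{fp}_{\mathcal{G}}(S)$ and let $S_{\mathrm{gr}}$ be the output of the Greedy algorithm. Then $\operatorname{fp}_{\mathcal{G}}(S_{\mathrm{gr}})\ge(1-1/e)\operatorname{fp}_{\mathcal{G}}(S^* )$.
   Context: A fitness graph is $\mathcal{G}=(G,(m,r))$ where $G=(V,E,w)$ is a strongly connected directed graph, $w(u,\cdot)$ is a probability distribution over out-neighbours of $u$, and $r,m\colon V\to(0,\infty)$; it is mutant-biased if $m(u)\ge r(u)$ for all $u$. For a configuration (set of mutants) $X\subseteq V$, $f_X(u)=m(u)$ if $u\in X$, else $r(u)$. The Heterogeneous Moran process starts at $\mathcal{X}_0=S$; from $\mathcal{X}_t=X$ it picks $u$ with probability $f_X(u)/\sum_v f_X(v)$, then $v$ with probability $w(u,v)$, and $v$ takes the type of $u$. $\operatorname{fp}_{\mathcal{G}}(S)$ is the probability that the process eventually reaches $V$. The Greedy algorithm starts with $S=\emptyset$ and, for $k$ iterations, adds to $S$ a node $v\notin S$ maximizing $\operatorname{fp}_{\mathcal{G}}(S\cup\{v\})$; its output is $S_{\mathrm{gr}}$. *)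

theory Defs
  imports Complex_Main
begin

definition fitness_graph ::
  "'v set \<Rightarrow> ('v \<times> 'v) set \<Rightarrow> ('v \<Rightarrow> 'v \<Rightarrow> real) \<Rightarrow> ('v \<Rightarrow> real) \<Rightarrow> ('v \<Rightarrow> real) \<Rightarrow> bool"
  where "fitness_graph V E w r m \<longleftrightarrow>
     finite V \<and> V \<noteq> {} \<and> E \<subseteq> V \<times> V \<and>
     (\<forall>u\<in>V. \<forall>v\<in>V. (u, v) \<in> E\<^sup>*) \<and>
     (\<forall>u\<in>V. \<forall>v\<in>V. ((u, v) \<in> E \<longrightarrow> w u v > 0) \<and> ((u, v) \<notin> E \<longrightarrow> w u v = 0)) \<and>
     (\<forall>u\<in>V. (\<Sum>v\<in>V. w u v) = 1) \<and>
     (\<forall>u\<in>V. r u > 0 \<and> m u > 0)"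

definition mutant_biased ::
  "'v set \<Rightarrow> ('v \<times> 'v) set \<Rightarrow> ('v \<Rightarrow> 'v \<Rightarrow> real) \<Rightarrow> ('v \<Rightarrow> real) \<Rightarrow> ('v \<Rightarrow> real) \<Rightarrow> bool"
  where "mutant_biased V E w r m \<longleftrightarrow> fitness_graph V E w r m \<and> (\<forall>u\<in>V. m u \<ge> r u)"

definition fit :: "('v \<Rightarrow> real) \<Rightarrow> ('v \<Rightarrow> real) \<Rightarrow> 'v set \<Rightarrow> 'v \<Rightarrow> real"
  where "fit r m X u = (if u \<in> X then m u else r u)"

definition moran_step :: "'v set \<Rightarrow> 'v \<Rightarrow> 'v \<Rightarrow> 'v set"
  where "moran_step X u v = (if u \<in> X then insert v X else X - {v})"

text \<open>Probability that the Heterogeneous Moran process started at X is at configuration V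
  after n steps.\<close>
primrec moran_at_full ::
  "'v set \<Rightarrow> ('v \<Rightarrow> 'v \<Rightarrow> real) \<Rightarrow> ('v \<Rightarrow> real) \<Rightarrow> ('v \<Rightarrow> real) \<Rightarrow> nat \<Rightarrow> 'v set \<Rightarrow> real"
  where
    "moran_at_full V w r m 0 X = (if X = V then 1 else 0)"
  | "moran_at_full V w r m (Suc n) X =
       (\<Sum>u\<in>V. \<Sum>v\<in>V. fit r m X u / (\<Sum>y\<in>V. fit r m X y) * w u v
                        * moran_at_full V w r m n (moran_step X u v))"

text \<open>Fixation probability: probability of eventually reaching V. Since V is absorbing,
  this is the limit of the probability of being at V after n steps.\<close>
definition fp :: "'v set \<Rightarrow> ('v \<Rightarrow> 'v \<Rightarrow> real) \<Rightarrow> ('v \<Rightarrow> real) \<Rightarrow> ('v \<Rightarrow> real) \<Rightarrow> 'v set \<Rightarrow> real"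
  where "fp V w r m S = lim (\<lambda>n. moran_at_full V w r m n S)"

text \<open>S is a possible output of the Greedy algorithm (any tie-breaking) with k iterations.\<close>
definition greedy_output :: "'v set \<Rightarrow> ('v set \<Rightarrow> real) \<Rightarrow> nat \<Rightarrow> 'v set \<Rightarrow> bool"
  where "greedy_output V f k S \<longleftrightarrow>
     (\<exists>Ss :: nat \<Rightarrow> 'v set. Ss 0 = {} \<and>
        (\<forall>i<k. \<exists>v\<in>V - Ss i. Ss (Suc i) = insert v (Ss i) \<and>
              (\<forall>u\<in>V - Ss i. f (insert u (Ss i)) \<le> f (insert v (Ss i)))) \<and>
        S = Ss k)"

end

theory Submission
  imports Defs
begin

(* The Greedy algorithm achieves a (1 - 1/e)-approximation for every monotone submodular set
   function f with f {} \<ge> 0 (Nemhauser, Wolsey and Fisher), so it suffices to show that the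
   fixation probability is monotone and submodular.

   The Moran chain does not show this directly, because its transition probabilities depend on
   the configuration through the total fitness. Since r \<le> m, it can be uniformized: select u
   with probability m u / (\<Sum>y. m y) and v with probability w u v; with probability r u / m u
   the reproduction is a Moran step, otherwise it happens only if u is a mutant. This chain
   differs from the Moran chain only by holding times, its transition probabilities do not
   depend on the configuration, and each of its transition maps on configurations is monotone
   and sends unions into unions and intersections into intersections. Hence its one-step
   operator preserves monotone submodular functions.

   Iterating it on the indicator of non-empty configurations (which, unlike the indicator of V,
   is submodular) gives the probabilities of non-extinction within n steps. They decrease to a
   function that is harmonic for the uniformized chain, hence for the Moran chain, with value 0
   at {} and 1 at V; by the maximum principle on the strongly connected graph, this function is
   the fixation probability. *)

section \<open>Monotone submodular set functions\<close>

definition submodular :: "'a set \<Rightarrow> ('a set \<Rightarrow> real) \<Rightarrow> bool" where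
  "submodular V f \<longleftrightarrow> (\<forall>A B. A \<subseteq> V \<longrightarrow> B \<subseteq> V \<longrightarrow> f (A \<union> B) + f (A \<inter> B) \<le> f A + f B)"

lemma submodularI:
  "(\<And>A B. A \<subseteq> V \<Longrightarrow> B \<subseteq> V \<Longrightarrow> f (A \<union> B) + f (A \<inter> B) \<le> f A + f B) \<Longrightarrow> submodular V f"
  by (simp add: submodular_def)

lemma submodularD:
  "submodular V f \<Longrightarrow> A \<subseteq> V \<Longrightarrow> B \<subseteq> V \<Longrightarrow> f (A \<union> B) + f (A \<inter> B) \<le> f A + f B"
  by (simp add: submodular_def)

lemma mono_on_sum:
  fixes f :: "'i \<Rightarrow> 'a::order \<Rightarrow> 'b::ordered_comm_monoid_add"
  shows "(\<And>i. i \<in> I \<Longrightarrow> mono_on A (f i)) \<Longrightarrow> mono_on A (\<lambda>x. \<Sum>i\<in>I. f i x)"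
  by (rule mono_onI) (auto intro!: sum_mono dest: mono_onD)

lemma mono_on_add:
  fixes f g :: "'a::order \<Rightarrow> 'b::ordered_ab_semigroup_add"
  shows "mono_on A f \<Longrightarrow> mono_on A g \<Longrightarrow> mono_on A (\<lambda>x. f x + g x)"
  by (rule mono_onI) (auto intro!: add_mono dest: mono_onD)

lemma mono_on_cmult:
  fixes f :: "'a::order \<Rightarrow> 'b::ordered_semiring"
  shows "0 \<le> c \<Longrightarrow> mono_on A f \<Longrightarrow> mono_on A (\<lambda>x. c * f x)"
  by (rule mono_onI) (auto intro!: mult_left_mono dest: mono_onD)

lemma mono_on_Pow_comp:
  assumes "mono_on (Pow V) f" "\<And>A. A \<subseteq> V \<Longrightarrow> g A \<subseteq> V" "\<And>A B. A \<subseteq> B \<Longrightarrow> g A \<subseteq> g B"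
  shows "mono_on (Pow V) (\<lambda>X. f (g X))"
proof (rule mono_onI)
  fix A B assume "A \<in> Pow V" "B \<in> Pow V" "A \<le> B"
  then show "f (g A) \<le> f (g B)"
    using assms by (intro mono_onD[OF assms(1)]) auto
qed

lemma mono_on_limit:
  fixes f :: "nat \<Rightarrow> 'a::order \<Rightarrow> real"
  assumes "\<And>n. mono_on A (f n)" "\<And>x. x \<in> A \<Longrightarrow> (\<lambda>n. f n x) \<longlonglongrightarrow> g x"
  shows "mono_on A g"
proof (rule mono_onI)
  fix x y assume "x \<in> A" "y \<in> A" "x \<le> y"
  then show "g x \<le> g y"
    using assms by (intro LIMSEQ_le[of "\<lambda>n. f n x" _ "\<lambda>n. f n y"]) (auto dest: mono_onD)
qed

lemma submodular_sum:
  "(\<And>i. i \<in> I \<Longrightarrow> submodular V (f i)) \<Longrightarrow> submodular V (\<lambda>X. \<Sum>i\<in>I. f i X)"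
  by (rule submodularI) (auto intro!: sum_mono simp: sum.distrib[symmetric] dest: submodularD)

lemma submodular_add:
  assumes "submodular V f" "submodular V g"
  shows "submodular V (\<lambda>X. f X + g X)"
proof (rule submodularI)
  fix A B assume "A \<subseteq> V" "B \<subseteq> V"
  then show "f (A \<union> B) + g (A \<union> B) + (f (A \<inter> B) + g (A \<inter> B)) \<le> f A + g A + (f B + g B)"
    using submodularD[OF assms(1), of A B] submodularD[OF assms(2), of A B] by simp
qed

lemma submodular_cmult:
  "0 \<le> c \<Longrightarrow> submodular V f \<Longrightarrow> submodular V (\<lambda>X. c * f X)"
  by (rule submodularI) (auto simp: distrib_left[symmetric] dest: submodularD intro: mult_left_mono)

lemma submodular_comp:
  assumes mono: "mono_on (Pow V) f" and submod: "submodular V f"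
    and g: "\<And>A. A \<subseteq> V \<Longrightarrow> g A \<subseteq> V"
    and g_Un: "\<And>A B. g (A \<union> B) \<subseteq> g A \<union> g B" and g_Int: "\<And>A B. g (A \<inter> B) \<subseteq> g A \<inter> g B"
  shows "submodular V (\<lambda>X. f (g X))"
proof (rule submodularI)
  fix A B assume "A \<subseteq> V" "B \<subseteq> V"
  then have "g A \<subseteq> V" "g B \<subseteq> V"
    by (simp_all add: g)
  then have "f (g (A \<union> B)) \<le> f (g A \<union> g B)" "f (g (A \<inter> B)) \<le> f (g A \<inter> g B)"
    using g_Un[of A B] g_Int[of A B] by (auto intro!: mono_onD[OF mono])
  moreover have "f (g A \<union> g B) + f (g A \<inter> g B) \<le> f (g A) + f (g B)"
    using \<open>g A \<subseteq> V\<close> \<open>g B \<subseteq> V\<close> by (rule submodularD[OF submod])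
  ultimately show "f (g (A \<union> B)) + f (g (A \<inter> B)) \<le> f (g A) + f (g B)"
    by linarith
qed

lemma submodular_limit:
  assumes "\<And>n. submodular V (f n)" "\<And>X. X \<subseteq> V \<Longrightarrow> (\<lambda>n. f n X) \<longlonglongrightarrow> g X"
  shows "submodular V g"
proof (rule submodularI)
  fix A B assume "A \<subseteq> V" "B \<subseteq> V"
  then have "(\<lambda>n. f n (A \<union> B) + f n (A \<inter> B)) \<longlonglongrightarrow> g (A \<union> B) + g (A \<inter> B)"
    "(\<lambda>n. f n A + f n B) \<longlonglongrightarrow> g A + g B"
    by (auto intro!: tendsto_add assms(2))
  moreover have "\<forall>n. f n (A \<union> B) + f n (A \<inter> B) \<le> f n A + f n B"
    using \<open>A \<subseteq> V\<close> \<open>B \<subseteq> V\<close> by (auto intro: submodularD[OF assms(1)])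
  ultimately show "g (A \<union> B) + g (A \<inter> B) \<le> g A + g B"
    by (auto intro: LIMSEQ_le)
qed

section \<open>The Greedy algorithm\<close>

lemma submodular_marginal_gain_antimono:
  assumes mono: "mono_on (Pow V) f" and submod: "submodular V f"
    and "A \<subseteq> B" "B \<subseteq> V" "x \<in> V"
  shows "f (insert x B) - f B \<le> f (insert x A) - f A"
proof -
  have "f (insert x A \<union> B) + f (insert x A \<inter> B) \<le> f (insert x A) + f B"
    using assms by (intro submodularD[OF submod]) auto
  moreover have "insert x A \<union> B = insert x B"
    using assms by auto
  moreover have "f A \<le> f (insert x A \<inter> B)"
    using assms by (intro mono_onD[OF mono]) auto
  ultimately show ?thesis by simp
qed

lemma submodular_le_sum_marginal_gains:
  assumes mono: "mono_on (Pow V) f" and submod: "submodular V f"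
    and "S \<subseteq> V" "T \<subseteq> V" "finite T"
  shows "f (S \<union> T) \<le> f S + (\<Sum>x\<in>T. f (insert x S) - f S)"
  using \<open>finite T\<close> \<open>T \<subseteq> V\<close>
proof (induction T rule: finite_induct)
  case empty
  then show ?case by simp
next
  case (insert x T)
  have "f (insert x (S \<union> T)) - f (S \<union> T) \<le> f (insert x S) - f S"
    using insert.prems \<open>S \<subseteq> V\<close> by (intro submodular_marginal_gain_antimono[OF mono submod]) auto
  then show ?case
    using insert by simp
qed

lemma greedy_step_gap:
  fixes f :: "'a set \<Rightarrow> real"
  assumes mono: "mono_on (Pow V) f" and submod: "submodular V f"
    and S: "S \<subseteq> V" and v: "v \<in> V"
    and greedy: "\<And>u. u \<in> V - S \<Longrightarrow> f (insert u S) \<le> f (insert v S)"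
    and T: "T \<subseteq> V" "finite T" "card T \<le> k" and "0 < k"
  shows "f T - f (insert v S) \<le> (1 - 1 / k) * (f T - f S)"
proof -
  define gain where "gain = f (insert v S) - f S"
  have gain_nonneg: "0 \<le> gain"
    unfolding gain_def using S v by (auto intro: mono_onD[OF mono])
  have "f (insert x S) - f S \<le> gain" if "x \<in> T" for x
    using that T S gain_nonneg greedy[of x] by (cases "x \<in> S") (auto simp: gain_def insert_absorb)
  then have "(\<Sum>x\<in>T. f (insert x S) - f S) \<le> card T * gain"
    using sum_mono[of T _ "\<lambda>_. gain"] by simp
  also have "\<dots> \<le> k * gain"
    using T gain_nonneg by (simp add: mult_right_mono)
  finally have "f (S \<union> T) \<le> f S + k * gain"
    using submodular_le_sum_marginal_gains[OF mono submod S T(1,2)] by simp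
  moreover have "f T \<le> f (S \<union> T)"
    using S T by (intro mono_onD[OF mono]) auto
  ultimately have "f T - f S \<le> k * ((f T - f S) - (f T - f (insert v S)))"
    unfolding gain_def by simp
  then show ?thesis
    using \<open>0 < k\<close> by (simp add: field_simps)
qed

lemma greedy_output_approximation:
  fixes f :: "'a set \<Rightarrow> real"
  assumes "finite V" and mono: "mono_on (Pow V) f" and submod: "submodular V f"
    and "0 \<le> f {}" and T: "T \<subseteq> V" "card T \<le> k"
    and "greedy_output V f k S"
  shows "(1 - 1 / exp 1) * f T \<le> f S"
proof -
  obtain Ss where Ss0: "Ss 0 = {}" and S: "S = Ss k"
    and Ss_Suc: "\<And>i. i < k \<Longrightarrow> \<exists>v\<in>V - Ss i. Ss (Suc i) = insert v (Ss i) \<and>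
       (\<forall>u\<in>V - Ss i. f (insert u (Ss i)) \<le> f (insert v (Ss i)))"
    using \<open>greedy_output V f k S\<close> unfolding greedy_output_def by blast
  have finite_T: "finite T"
    using T \<open>finite V\<close> finite_subset by blast
  have gap: "Ss i \<subseteq> V \<and> f T - f (Ss i) \<le> (1 - 1 / k) ^ i * (f T - f {})" if "i \<le> k" for i
    using that
  proof (induction i)
    case 0
    then show ?case by (simp add: Ss0)
  next
    case (Suc i)
    then obtain v where v: "v \<in> V - Ss i" "Ss (Suc i) = insert v (Ss i)"
      and greedy: "\<And>u. u \<in> V - Ss i \<Longrightarrow> f (insert u (Ss i)) \<le> f (insert v (Ss i))"
      using Ss_Suc[of i] by auto
    have "f T - f (Ss (Suc i)) \<le> (1 - 1 / k) * (f T - f (Ss i))"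
      using Suc v greedy finite_T T
      by (auto intro!: greedy_step_gap[OF mono submod])
    also have "\<dots> \<le> (1 - 1 / k) * ((1 - 1 / k) ^ i * (f T - f {}))"
      using Suc by (intro mult_left_mono) auto
    finally show ?case
      using Suc v by simp
  qed
  have "(1 - 1 / k) ^ k * (f T - f {}) \<le> exp (- 1) * (f T - f {})"
  proof (cases "k = 0")
    case True
    \<comment> \<open>here 1 / k = 0 and the exponential bound fails, but T = {}\<close>
    then show ?thesis
      using T finite_T by simp
  next
    case False
    moreover have "0 \<le> f T - f {}"
      using T by (auto intro: mono_onD[OF mono])
    ultimately show ?thesis
      using exp_ge_one_minus_x_over_n_power_n[of 1 k] by (intro mult_right_mono) auto
  qed
  also have "\<dots> \<le> exp (- 1) * f T"
    using \<open>0 \<le> f {}\<close> by simp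
  finally have "f T - f S \<le> exp (- 1) * f T"
    using gap[of k] S by simp
  then show ?thesis
    by (simp add: exp_minus field_simps)
qed

section \<open>The Moran operator\<close>

definition moran_op ::
  "'v set \<Rightarrow> ('v \<Rightarrow> 'v \<Rightarrow> real) \<Rightarrow> ('v \<Rightarrow> real) \<Rightarrow> ('v \<Rightarrow> real) \<Rightarrow> ('v set \<Rightarrow> real) \<Rightarrow> 'v set \<Rightarrow> real"
  where "moran_op V w r m f X =
    (\<Sum>u\<in>V. \<Sum>v\<in>V. fit r m X u / (\<Sum>y\<in>V. fit r m X y) * w u v * f (moran_step X u v))"

lemma moran_at_full_Suc_eq_moran_op [simp]:
  "moran_at_full V w r m (Suc n) X = moran_op V w r m (moran_at_full V w r m n) X"
  by (simp add: moran_op_def)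

declare moran_at_full.simps(2) [simp del]

lemma moran_step_subset: "X \<subseteq> V \<Longrightarrow> v \<in> V \<Longrightarrow> moran_step X u v \<subseteq> V"
  by (auto simp: moran_step_def)

lemma rtrancl_exit_edge:
  assumes "(x, y) \<in> E\<^sup>*" "x \<in> X" "y \<notin> X"
  shows "\<exists>a b. (a, b) \<in> E \<and> a \<in> X \<and> b \<notin> X"
  using assms by (induction rule: rtrancl_induct) auto

locale moran_process =
  fixes V :: "'v set" and E :: "('v \<times> 'v) set" and w :: "'v \<Rightarrow> 'v \<Rightarrow> real"
    and r m :: "'v \<Rightarrow> real"
  assumes fitness_graph: "fitness_graph V E w r m"
begin

lemma finite_V: "finite V"
  and V_nonempty: "V \<noteq> {}"
  and E_subset: "E \<subseteq> V \<times> V"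
  and strongly_connected: "\<And>u v. u \<in> V \<Longrightarrow> v \<in> V \<Longrightarrow> (u, v) \<in> E\<^sup>*"
  and w_pos: "\<And>u v. (u, v) \<in> E \<Longrightarrow> 0 < w u v"
  and w_nonneg: "\<And>u v. u \<in> V \<Longrightarrow> v \<in> V \<Longrightarrow> 0 \<le> w u v"
  and w_sum: "\<And>u. u \<in> V \<Longrightarrow> (\<Sum>v\<in>V. w u v) = 1"
  and r_pos: "\<And>u. u \<in> V \<Longrightarrow> 0 < r u"
  and m_pos: "\<And>u. u \<in> V \<Longrightarrow> 0 < m u"
  using fitness_graph unfolding fitness_graph_def by (auto simp: less_eq_real_def)

abbreviation P :: "('v set \<Rightarrow> real) \<Rightarrow> 'v set \<Rightarrow> real"
  where "P \<equiv> moran_op V w r m"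

abbreviation F :: "'v set \<Rightarrow> real"
  where "F X \<equiv> \<Sum>y\<in>V. fit r m X y"

abbreviation p :: "nat \<Rightarrow> 'v set \<Rightarrow> real"
  where "p \<equiv> moran_at_full V w r m"

lemma fit_pos: "u \<in> V \<Longrightarrow> 0 < fit r m X u"
  using r_pos m_pos by (simp add: fit_def)

lemma total_fitness_pos: "0 < F X"
  using fit_pos finite_V V_nonempty by (simp add: sum_pos)

lemma moran_coeff_nonneg: "u \<in> V \<Longrightarrow> v \<in> V \<Longrightarrow> 0 \<le> fit r m X u / F X * w u v"
  using fit_pos[of u X] total_fitness_pos[of X] w_nonneg[of u v] by simp

lemma moran_coeff_sum: "(\<Sum>u\<in>V. \<Sum>v\<in>V. fit r m X u / F X * w u v) = 1"
proof -
  have "(\<Sum>u\<in>V. \<Sum>v\<in>V. fit r m X u / F X * w u v) = (\<Sum>u\<in>V. fit r m X u / F X * (\<Sum>v\<in>V. w u v))"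
    by (simp add: sum_distrib_left)
  also have "\<dots> = (\<Sum>u\<in>V. fit r m X u / F X)"
    using w_sum by simp
  also have "\<dots> = 1"
    using total_fitness_pos[of X] by (simp add: sum_divide_distrib[symmetric])
  finally show ?thesis .
qed

lemma moran_op_const: "P (\<lambda>_. c) X = c"
proof -
  have "P (\<lambda>_. c) X = (\<Sum>u\<in>V. \<Sum>v\<in>V. fit r m X u / F X * w u v) * c"
    unfolding moran_op_def by (simp add: sum_distrib_right)
  then show ?thesis
    using moran_coeff_sum[of X] by simp
qed

lemma moran_op_mono: "(\<And>Y. f Y \<le> g Y) \<Longrightarrow> P f X \<le> P g X"
  unfolding moran_op_def by (intro sum_mono mult_left_mono moran_coeff_nonneg) auto

lemma moran_op_diff: "P (\<lambda>Y. f Y - g Y) X = P f X - P g X"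
  unfolding moran_op_def by (simp add: right_diff_distrib sum_subtractf)

lemma moran_op_fixed:
  assumes "\<And>u v. u \<in> V \<Longrightarrow> v \<in> V \<Longrightarrow> moran_step X u v = X"
  shows "P f X = f X"
proof -
  have "P f X = P (\<lambda>_. f X) X"
    unfolding moran_op_def using assms by (intro sum.cong refl) auto
  then show ?thesis
    by (simp add: moran_op_const)
qed

lemma moran_op_V: "P f V = f V"
  by (rule moran_op_fixed) (auto simp: moran_step_def insert_absorb)

lemma moran_op_empty: "P f {} = f {}"
  by (rule moran_op_fixed) (simp add: moran_step_def)

lemma moran_op_tendsto:
  "(\<And>Y. (\<lambda>n. f n Y) \<longlonglongrightarrow> g Y) \<Longrightarrow> (\<lambda>n. P (f n) X) \<longlonglongrightarrow> P g X"
  unfolding moran_op_def by (intro tendsto_sum tendsto_mult_left)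

lemma moran_at_full_bounds: "0 \<le> p n X \<and> p n X \<le> 1"
proof (induction n arbitrary: X)
  case (Suc n)
  then have "P (\<lambda>_. 0) X \<le> P (p n) X" "P (p n) X \<le> P (\<lambda>_. 1) X"
    by (auto intro!: moran_op_mono)
  then show ?case
    by (simp add: moran_op_const)
qed simp

lemma moran_at_full_V: "p n V = 1"
  by (induction n) (simp_all add: moran_op_V)

lemma moran_at_full_empty: "p n {} = 0"
  using V_nonempty by (induction n) (simp_all add: moran_op_empty)

lemma moran_at_full_incseq: "incseq (\<lambda>n. p n X)"
proof (rule incseq_SucI)
  show "p n X \<le> p (Suc n) X" for n
  proof (induction n arbitrary: X)
    case 0
    show ?case
      using moran_at_full_bounds[of "Suc 0" X] by (cases "X = V") (simp_all add: moran_op_V)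
  next
    case (Suc n)
    then show ?case
      by (simp add: moran_op_mono)
  qed
qed

lemma moran_at_full_tendsto_fp: "(\<lambda>n. p n X) \<longlonglongrightarrow> fp V w r m X"
proof -
  have "convergent (\<lambda>n. p n X)"
    using moran_at_full_incseq moran_at_full_bounds
    by (intro Bseq_monoseq_convergent) (auto simp: monoseq_iff intro!: BseqI'[of _ 1])
  then show ?thesis
    unfolding fp_def by (rule convergent_LIMSEQ_iff[THEN iffD1])
qed

lemma fp_V: "fp V w r m V = 1"
  using moran_at_full_tendsto_fp[of V] by (simp add: moran_at_full_V LIMSEQ_const_iff)

lemma fp_empty: "fp V w r m {} = 0"
  using moran_at_full_tendsto_fp[of "{}"] by (simp add: moran_at_full_empty LIMSEQ_const_iff)

lemma fp_harmonic: "P (fp V w r m) X = fp V w r m X"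
proof -
  have "(\<lambda>n. p (Suc n) X) \<longlonglongrightarrow> P (fp V w r m) X"
    unfolding moran_at_full_Suc_eq_moran_op by (rule moran_op_tendsto[OF moran_at_full_tendsto_fp])
  moreover have "(\<lambda>n. p (Suc n) X) \<longlonglongrightarrow> fp V w r m X"
    using moran_at_full_tendsto_fp by (rule LIMSEQ_Suc)
  ultimately show ?thesis
    by (rule LIMSEQ_unique)
qed

lemma harmonic_max_propagates:
  assumes harmonic: "P f X = f X" and max: "\<And>Y. Y \<subseteq> V \<Longrightarrow> f Y \<le> f X"
    and X: "X \<subseteq> V" and edge: "(a, b) \<in> E"
  shows "f (moran_step X a b) = f X"
proof -
  define c where "c u v = fit r m X u / F X * w u v" for u v
  define t where "t u v = c u v * (f X - f (moran_step X u v))" for u v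
  have t_nonneg: "0 \<le> t u v" if "u \<in> V" "v \<in> V" for u v
    unfolding t_def c_def using that X moran_step_subset[OF X, of v u]
    by (intro mult_nonneg_nonneg moran_coeff_nonneg) (auto intro: max)
  have "(\<Sum>u\<in>V. \<Sum>v\<in>V. t u v) = P (\<lambda>Y. f X - f Y) X"
    unfolding t_def c_def moran_op_def ..
  also have "\<dots> = 0"
    using harmonic moran_op_diff[of "\<lambda>_. f X" f X] by (simp add: moran_op_const)
  finally have "t a b = 0"
    using edge E_subset t_nonneg finite_V
    by (auto simp: sum_nonneg_eq_0_iff sum_nonneg)
  moreover have "0 < c a b"
    unfolding c_def
    using edge E_subset by (auto intro!: mult_pos_pos divide_pos_pos fit_pos total_fitness_pos w_pos)
  ultimately show ?thesis
    unfolding t_def by simp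
qed

lemma maximum_principle:
  assumes harmonic: "\<And>X. X \<subseteq> V \<Longrightarrow> P f X = f X" and "f {} \<le> 0" "f V \<le> 0" and "X \<subseteq> V"
  shows "f X \<le> 0"
proof -
  define maximizers where "maximizers = {Y. Y \<subseteq> V \<and> (\<forall>Z. Z \<subseteq> V \<longrightarrow> f Z \<le> f Y)}"
  have "maximizers \<subseteq> Pow V"
    unfolding maximizers_def by blast
  then have "finite maximizers"
    using finite_V finite_subset by blast
  have "Max (f ` Pow V) \<in> f ` Pow V"
    using finite_V by (intro Max_in) auto
  then obtain Y where "Y \<subseteq> V" "f Y = Max (f ` Pow V)"
    by auto
  then have "Y \<in> maximizers"
    unfolding maximizers_def using finite_V by (auto intro!: Max_ge)
  obtain Xm where "Xm \<in> maximizers"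
    and Xm_maximal: "\<forall>Y\<in>maximizers. Xm \<subseteq> Y \<longrightarrow> Xm = Y"
    using finite_has_maximal2[OF \<open>finite maximizers\<close> \<open>Y \<in> maximizers\<close>] by auto
  then have Xm: "Xm \<subseteq> V" and Xm_max: "\<And>Z. Z \<subseteq> V \<Longrightarrow> f Z \<le> f Xm"
    unfolding maximizers_def by auto
  have "Xm = {} \<or> Xm = V"
  proof (rule ccontr)
    assume "\<not> (Xm = {} \<or> Xm = V)"
    then obtain x y where x: "x \<in> Xm" "x \<in> V" and y: "y \<in> V" "y \<notin> Xm"
      using Xm by auto
    obtain a b where ab: "(a, b) \<in> E" "a \<in> Xm" "b \<notin> Xm"
      using rtrancl_exit_edge[OF strongly_connected[OF x(2) y(1)] x(1) y(2)] by blast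
    have "f (moran_step Xm a b) = f Xm"
      by (rule harmonic_max_propagates[OF harmonic[OF Xm] Xm_max Xm ab(1)])
    moreover have "moran_step Xm a b = insert b Xm"
      using ab(2) by (simp add: moran_step_def)
    moreover have "insert b Xm \<subseteq> V"
      using Xm ab(1) E_subset by auto
    ultimately have "insert b Xm \<in> maximizers"
      unfolding maximizers_def using Xm_max by simp
    then show False
      using Xm_maximal ab(3) by blast
  qed
  then have "f Xm \<le> 0"
    using \<open>f {} \<le> 0\<close> \<open>f V \<le> 0\<close> by blast
  moreover have "f X \<le> f Xm"
    using Xm_max \<open>X \<subseteq> V\<close> .
  ultimately show "f X \<le> 0"
    by simp
qed

lemma harmonic_unique:
  assumes "\<And>X. X \<subseteq> V \<Longrightarrow> P f X = f X" "\<And>X. X \<subseteq> V \<Longrightarrow> P g X = g X"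
    and "f {} = g {}" "f V = g V" and "X \<subseteq> V"
  shows "f X = g X"
proof -
  have "f X - g X \<le> 0"
    by (rule maximum_principle[of "\<lambda>Y. f Y - g Y"]) (use assms in \<open>auto simp: moran_op_diff\<close>)
  moreover have "g X - f X \<le> 0"
    by (rule maximum_principle[of "\<lambda>Y. g Y - f Y"]) (use assms in \<open>auto simp: moran_op_diff\<close>)
  ultimately show ?thesis
    by simp
qed

end

section \<open>The uniformized Moran process\<close>

definition mutant_step :: "'v set \<Rightarrow> 'v \<Rightarrow> 'v \<Rightarrow> 'v set"
  where "mutant_step X u v = (if u \<in> X then insert v X else X)"

definition uniformized_moran_op ::
  "'v set \<Rightarrow> ('v \<Rightarrow> 'v \<Rightarrow> real) \<Rightarrow> ('v \<Rightarrow> real) \<Rightarrow> ('v \<Rightarrow> real) \<Rightarrow> ('v set \<Rightarrow> real) \<Rightarrow> 'v set \<Rightarrow> real"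
  where "uniformized_moran_op V w r m f X =
    (\<Sum>u\<in>V. \<Sum>v\<in>V. w u v * r u / (\<Sum>y\<in>V. m y) * f (moran_step X u v)
                   + w u v * (m u - r u) / (\<Sum>y\<in>V. m y) * f (mutant_step X u v))"

lemma moran_step_Un: "moran_step (A \<union> B) u v = moran_step A u v \<union> moran_step B u v"
  by (auto simp: moran_step_def)

lemma moran_step_Int: "moran_step (A \<inter> B) u v = moran_step A u v \<inter> moran_step B u v"
  by (auto simp: moran_step_def)

lemma moran_step_mono: "A \<subseteq> B \<Longrightarrow> moran_step A u v \<subseteq> moran_step B u v"
  by (auto simp: moran_step_def)

lemma mutant_step_Un: "mutant_step (A \<union> B) u v = mutant_step A u v \<union> mutant_step B u v"
  by (auto simp: mutant_step_def)

lemma mutant_step_Int_subset: "mutant_step (A \<inter> B) u v \<subseteq> mutant_step A u v \<inter> mutant_step B u v"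
  by (auto simp: mutant_step_def)

lemma mutant_step_mono: "A \<subseteq> B \<Longrightarrow> mutant_step A u v \<subseteq> mutant_step B u v"
  by (auto simp: mutant_step_def)

lemma mutant_step_subset: "X \<subseteq> V \<Longrightarrow> v \<in> V \<Longrightarrow> mutant_step X u v \<subseteq> V"
  by (auto simp: mutant_step_def)

context moran_process
begin

abbreviation L :: "('v set \<Rightarrow> real) \<Rightarrow> 'v set \<Rightarrow> real"
  where "L \<equiv> uniformized_moran_op V w r m"

abbreviation M :: real
  where "M \<equiv> \<Sum>y\<in>V. m y"

lemma total_mutant_fitness_pos: "0 < M"
  using m_pos finite_V V_nonempty by (simp add: sum_pos)

lemma uniformized_moran_op_eq: "L f X = F X / M * P f X + (1 - F X / M) * f X"
proof -
  have per_edge: "w u v * r u / M * f (moran_step X u v) + w u v * (m u - r u) / M * f (mutant_step X u v)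
      = fit r m X u * w u v / M * f (moran_step X u v) + (m u - fit r m X u) * w u v / M * f X"
    for u v
    using total_mutant_fitness_pos
    by (cases "u \<in> X") (simp_all add: fit_def mutant_step_def moran_step_def field_simps)
  have "F X / M * P f X = (\<Sum>u\<in>V. \<Sum>v\<in>V. fit r m X u * w u v / M * f (moran_step X u v))"
    unfolding moran_op_def sum_distrib_left
    using total_fitness_pos[of X] by (intro sum.cong refl) simp
  moreover have "(\<Sum>u\<in>V. \<Sum>v\<in>V. (m u - fit r m X u) * w u v / M * f X) = (1 - F X / M) * f X"
  proof -
    have "(\<Sum>u\<in>V. \<Sum>v\<in>V. (m u - fit r m X u) * w u v / M * f X)
        = (\<Sum>u\<in>V. (m u - fit r m X u) / M * f X * (\<Sum>v\<in>V. w u v))"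
      unfolding sum_distrib_left by (intro sum.cong refl) (simp add: mult_ac)
    also have "\<dots> = (\<Sum>u\<in>V. m u - fit r m X u) / M * f X"
      using w_sum by (simp add: sum_divide_distrib sum_distrib_right)
    also have "\<dots> = (1 - F X / M) * f X"
      using total_mutant_fitness_pos by (simp add: sum_subtractf field_simps)
    finally show ?thesis .
  qed
  ultimately show ?thesis
    unfolding uniformized_moran_op_def per_edge sum.distrib by simp
qed

end

locale mutant_biased_moran_process = moran_process V E w r m
  for V :: "'v set" and E w r m +
  assumes r_le_m: "\<And>u. u \<in> V \<Longrightarrow> r u \<le> m u"
begin

lemma total_fitness_le: "F X \<le> M"
  unfolding fit_def using r_le_m by (intro sum_mono) auto

lemma uniformized_moran_op_const: "L (\<lambda>_. c) X = c"
  by (simp add: uniformized_moran_op_eq moran_op_const algebra_simps)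

lemma uniformized_moran_op_mono: "(\<And>Y. f Y \<le> g Y) \<Longrightarrow> L f X \<le> L g X"
  unfolding uniformized_moran_op_eq
  using total_fitness_pos[of X] total_fitness_le[of X] total_mutant_fitness_pos
  by (intro add_mono mult_left_mono moran_op_mono) auto

lemma uniformized_moran_op_V: "L f V = f V"
  by (simp add: uniformized_moran_op_eq moran_op_V algebra_simps)

lemma uniformized_moran_op_empty: "L f {} = f {}"
  by (simp add: uniformized_moran_op_eq moran_op_empty algebra_simps)

lemma uniformized_moran_op_tendsto:
  "(\<And>Y. (\<lambda>n. f n Y) \<longlonglongrightarrow> g Y) \<Longrightarrow> (\<lambda>n. L (f n) X) \<longlonglongrightarrow> L g X"
  unfolding uniformized_moran_op_eq by (intro tendsto_intros moran_op_tendsto)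

lemma uniformized_harmonic_iff: "L f X = f X \<longleftrightarrow> P f X = f X"
proof -
  have "L f X - f X = F X / M * (P f X - f X)"
    by (simp add: uniformized_moran_op_eq algebra_simps diff_divide_distrib)
  moreover have "0 < F X / M"
    using total_fitness_pos total_mutant_fitness_pos by simp
  ultimately show ?thesis
    by auto
qed

lemma uniformized_moran_op_mono_submodular:
  assumes mono: "mono_on (Pow V) f" and submod: "submodular V f"
  shows "mono_on (Pow V) (L f)" "submodular V (L f)"
proof -
  have coeffs: "0 \<le> w u v * r u / M" "0 \<le> w u v * (m u - r u) / M" if "u \<in> V" "v \<in> V" for u v
    using that w_nonneg[of u v] r_pos[of u] r_le_m[of u] total_mutant_fitness_pos by simp_all
  show "mono_on (Pow V) (L f)"
    unfolding uniformized_moran_op_def[abs_def] using coeffs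
    by (intro mono_on_sum mono_on_add mono_on_cmult mono_on_Pow_comp[OF mono])
       (auto simp: moran_step_subset mutant_step_subset moran_step_mono mutant_step_mono)
  show "submodular V (L f)"
    unfolding uniformized_moran_op_def[abs_def] using coeffs
    by (intro submodular_sum submodular_add submodular_cmult submodular_comp[OF mono submod])
       (auto simp: moran_step_subset mutant_step_subset moran_step_Un moran_step_Int
          mutant_step_Un dest: mutant_step_Int_subset[THEN subsetD])
qed

definition nonextinct_prob :: "nat \<Rightarrow> 'v set \<Rightarrow> real"
  where "nonextinct_prob n = (L ^^ n) (\<lambda>X. if X = {} then 0 else 1)"

lemma nonextinct_prob_0: "nonextinct_prob 0 X = (if X = {} then 0 else 1)"
  by (simp add: nonextinct_prob_def)

lemma nonextinct_prob_Suc: "nonextinct_prob (Suc n) = L (nonextinct_prob n)"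
  by (simp add: nonextinct_prob_def)

lemma nonextinct_prob_bounds: "0 \<le> nonextinct_prob n X \<and> nonextinct_prob n X \<le> 1"
proof (induction n arbitrary: X)
  case (Suc n)
  then have "L (\<lambda>_. 0) X \<le> L (nonextinct_prob n) X" "L (nonextinct_prob n) X \<le> L (\<lambda>_. 1) X"
    by (auto intro!: uniformized_moran_op_mono)
  then show ?case
    by (simp add: nonextinct_prob_Suc uniformized_moran_op_const)
qed (simp add: nonextinct_prob_0)

lemma nonextinct_prob_empty: "nonextinct_prob n {} = 0"
  by (induction n) (simp_all add: nonextinct_prob_0 nonextinct_prob_Suc uniformized_moran_op_empty)

lemma nonextinct_prob_V: "nonextinct_prob n V = 1"
  using V_nonempty
  by (induction n) (simp_all add: nonextinct_prob_0 nonextinct_prob_Suc uniformized_moran_op_V)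

lemma nonextinct_prob_decseq: "decseq (\<lambda>n. nonextinct_prob n X)"
proof (rule decseq_SucI)
  show "nonextinct_prob (Suc n) X \<le> nonextinct_prob n X" for n
  proof (induction n arbitrary: X)
    case 0
    show ?case
      using nonextinct_prob_bounds[of "Suc 0" X] nonextinct_prob_empty[of "Suc 0"]
      by (cases "X = {}") (simp_all add: nonextinct_prob_0)
  next
    case (Suc n)
    then show ?case
      unfolding nonextinct_prob_Suc[of "Suc n"] nonextinct_prob_Suc[of n]
      by (rule uniformized_moran_op_mono)
  qed
qed

lemma nonextinct_prob_mono_submodular:
  "mono_on (Pow V) (nonextinct_prob n) \<and> submodular V (nonextinct_prob n)"
proof (induction n)
  case 0
  have "mono_on (Pow V) (nonextinct_prob 0)"
    by (rule mono_onI) (auto simp: nonextinct_prob_0)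
  moreover have "submodular V (nonextinct_prob 0)"
    by (rule submodularI) (auto simp: nonextinct_prob_0)
  ultimately show ?case ..
next
  case (Suc n)
  then show ?case
    unfolding nonextinct_prob_Suc by (auto intro: uniformized_moran_op_mono_submodular)
qed

lemma nonextinct_prob_tendsto_fp:
  assumes "X \<subseteq> V"
  shows "(\<lambda>n. nonextinct_prob n X) \<longlonglongrightarrow> fp V w r m X"
proof -
  define h where "h Y = lim (\<lambda>n. nonextinct_prob n Y)" for Y
  have h: "(\<lambda>n. nonextinct_prob n Y) \<longlonglongrightarrow> h Y" for Y
  proof -
    have "convergent (\<lambda>n. nonextinct_prob n Y)"
      using nonextinct_prob_decseq nonextinct_prob_bounds
      by (intro Bseq_monoseq_convergent) (auto simp: monoseq_iff intro!: BseqI'[of _ 1])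
    then show ?thesis
      unfolding h_def by (rule convergent_LIMSEQ_iff[THEN iffD1])
  qed
  have "L h Y = h Y" for Y
  proof -
    have "(\<lambda>n. nonextinct_prob (Suc n) Y) \<longlonglongrightarrow> L h Y"
      unfolding nonextinct_prob_Suc by (rule uniformized_moran_op_tendsto[OF h])
    moreover have "(\<lambda>n. nonextinct_prob (Suc n) Y) \<longlonglongrightarrow> h Y"
      using h by (rule LIMSEQ_Suc)
    ultimately show ?thesis
      by (rule LIMSEQ_unique)
  qed
  then have h_harmonic: "P h Y = h Y" for Y
    by (simp add: uniformized_harmonic_iff)
  have "h {} = 0" "h V = 1"
    using h[of "{}"] h[of V] by (simp_all add: nonextinct_prob_empty nonextinct_prob_V LIMSEQ_const_iff)
  then have "h X = fp V w r m X"
    by (intro harmonic_unique[OF h_harmonic fp_harmonic _ _ assms]) (simp_all add: fp_empty fp_V)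
  then show ?thesis
    using h[of X] by simp
qed

lemma fp_mono_on: "mono_on (Pow V) (fp V w r m)"
  by (rule mono_on_limit[where f = nonextinct_prob])
    (simp_all add: nonextinct_prob_mono_submodular nonextinct_prob_tendsto_fp)

lemma fp_submodular: "submodular V (fp V w r m)"
  by (rule submodular_limit[where f = nonextinct_prob])
    (simp_all add: nonextinct_prob_mono_submodular nonextinct_prob_tendsto_fp)

end

theorem theorem3:
  fixes V :: "'v set" and E :: "('v \<times> 'v) set" and w :: "'v \<Rightarrow> 'v \<Rightarrow> real"
    and r m :: "'v \<Rightarrow> real" and k :: nat and Sopt Sgr :: "'v set"
  assumes "mutant_biased V E w r m"
    and "Sopt \<subseteq> V" and "card Sopt \<le> k"
    and "\<forall>S. S \<subseteq> V \<and> card S \<le> k \<longrightarrow> fp V w r m S \<le> fp V w r m Sopt"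
    and "greedy_output V (fp V w r m) k Sgr"
  shows "fp V w r m Sgr \<ge> (1 - 1 / exp 1) * fp V w r m Sopt"
proof -
  interpret mutant_biased_moran_process V E w r m
    using assms(1) by unfold_locales (auto simp: mutant_biased_def)
  show ?thesis
    using greedy_output_approximation[OF finite_V fp_mono_on fp_submodular _ assms(2,3,5)]
    by (simp add: fp_empty)
qed

end
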